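(* Let $l\geq 1$ and let $\rho_{A_{1}A_{1}'\cdots A_{l}A_{l}'}$ be a density operator on a finite-dimensional tensor-product Hilbert space $\mathcal{H}_{A_1}\otimes\mathcal{H}_{A_1'}\otimes\cdots\otimes\mathcal{H}_{A_l}\otimes\mathcal{H}_{A_l'}$. Then \[ I(A_{1}A_{1}':\cdots:A_{l}A_{l}')_{\rho}-I(A_{1}':\cdots:A_{l}')_{\rho}=\sum_{i=1}^{l}I\big(A_{i};A_{1}^{i-1}A'_{[l]\setminus\{i\}}\,\big|\,A_{i}'\big)_{\rho}, \] where $A_{1}^{i-1}$ denotes the systems $A_{1}\cdots A_{i-1}$ (empty if $i=1$) and $A'_{[l]\setminus\{i\}}$ denotes all of the systems $A_1',\dots,A_l'$ except $A_i'$. Moreover, the expansion may proceed in any order: for every permutation $\pi$ of $\{1,\dots,l\}$, \[ I(A_{1}A_{1}':\cdots:A_{l}A_{l}')_{\rho}-I(A_{1}':\cdots:A_{l}')_{\rho}=\sum_{i=1}^{l}I\big(A_{\pi(i)};A_{\pi(1)}\cdots A_{\pi(i-1)}A'_{[l]\setminus\{\pi(i)\}}\,\big|\,A_{\pi(i)}'\big)_{\rho}. \]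
   Context: All entropies use the natural logarithm. For a state $\sigma$ on system $S$, $H(S)_\sigma=-\operatorname{Tr}\{\sigma\log\sigma\}$; marginal entropies are computed from reduced density operators. The multipartite information of a state on systems $B_1,\dots,B_m$ is $I(B_1:\cdots:B_m)=\sum_{j=1}^m H(B_j)-H(B_1\cdots B_m)$. The conditional quantum mutual information is $I(A;B|C)=H(AC)+H(BC)-H(C)-H(ABC)$. *)

theory Defs
  imports Complex_Main "HOL-Combinatorics.Permutations"
begin

text \<open>Subsystems are labelled by
elements of a type 's; subsystem s has Hilbert space dimension d s.  The computational
basis of the composite system on a finite label set S is indexed by the configurations
x :: 's \<Rightarrow> nat with x s < d s on S and x s = 0 off S.\<close>

definition cfgs :: "('s \<Rightarrow> nat) \<Rightarrow> 's set \<Rightarrow> ('s \<Rightarrow> nat) set" where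
  "cfgs d S = {x. (\<forall>s\<in>S. x s < d s) \<and> (\<forall>s. s \<notin> S \<longrightarrow> x s = 0)}"

type_synonym 's op = "('s \<Rightarrow> nat) \<Rightarrow> ('s \<Rightarrow> nat) \<Rightarrow> complex"

definition density :: "('s \<Rightarrow> nat) \<Rightarrow> 's set \<Rightarrow> 's op \<Rightarrow> bool" where
  "density d S \<rho> \<longleftrightarrow>
     (\<forall>x\<in>cfgs d S. \<forall>y\<in>cfgs d S. \<rho> y x = cnj (\<rho> x y)) \<and>
     (\<forall>v :: ('s \<Rightarrow> nat) \<Rightarrow> complex.
        0 \<le> Re (\<Sum>x\<in>cfgs d S. \<Sum>y\<in>cfgs d S. cnj (v x) * \<rho> x y * v y)) \<and>
     (\<Sum>x\<in>cfgs d S. \<rho> x x) = 1"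

definition ptrace :: "('s \<Rightarrow> nat) \<Rightarrow> 's set \<Rightarrow> 's set \<Rightarrow> 's op \<Rightarrow> 's op" where
  "ptrace d S T \<rho> = (\<lambda>x y. \<Sum>z\<in>cfgs d (S - T).
      \<rho> (\<lambda>s. if s \<in> T then x s else z s) (\<lambda>s. if s \<in> T then y s else z s))"

text \<open>Von Neumann entropy -Tr(M log M) (natural log) of a Hermitian matrix on the finite
index set D, computed from a spectral decomposition M = \<Sum>_k p_k v_k v_k^* with an
orthonormal eigenbasis (v_k) and real eigenvalues p_k (convention 0 log 0 = 0).\<close>
definition vn_entropy :: "('i set) \<Rightarrow> ('i \<Rightarrow> 'i \<Rightarrow> complex) \<Rightarrow> real" where
  "vn_entropy D M = (THE h. \<exists>(p :: 'i \<Rightarrow> real) (v :: 'i \<Rightarrow> 'i \<Rightarrow> complex).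
      (\<forall>k\<in>D. \<forall>k'\<in>D. (\<Sum>x\<in>D. v k x * cnj (v k' x)) = (if k = k' then 1 else 0)) \<and>
      (\<forall>x\<in>D. \<forall>y\<in>D. M x y = (\<Sum>k\<in>D. complex_of_real (p k) * v k x * cnj (v k y))) \<and>
      h = - (\<Sum>k\<in>D. p k * ln (p k)))"

definition ent :: "('s \<Rightarrow> nat) \<Rightarrow> 's set \<Rightarrow> 's op \<Rightarrow> 's set \<Rightarrow> real" where
  "ent d S \<rho> T = vn_entropy (cfgs d T) (ptrace d S T \<rho>)"

definition multi_info :: "('s \<Rightarrow> nat) \<Rightarrow> 's set \<Rightarrow> 's op \<Rightarrow> 'j set \<Rightarrow> ('j \<Rightarrow> 's set) \<Rightarrow> real" where
  "multi_info d S \<rho> J B = (\<Sum>j\<in>J. ent d S \<rho> (B j)) - ent d S \<rho> (\<Union>j\<in>J. B j)"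

definition cmi :: "('s \<Rightarrow> nat) \<Rightarrow> 's set \<Rightarrow> 's op \<Rightarrow> 's set \<Rightarrow> 's set \<Rightarrow> 's set \<Rightarrow> real" where
  "cmi d S \<rho> A B C = ent d S \<rho> (A \<union> C) + ent d S \<rho> (B \<union> C) - ent d S \<rho> C
      - ent d S \<rho> (A \<union> B \<union> C)"

text \<open>Labels: (i, False) is A_i and (i, True) is A_i'.\<close>
abbreviation sysA :: "nat \<Rightarrow> nat \<times> bool" where "sysA i \<equiv> (i, False)"
abbreviation sysA' :: "nat \<Rightarrow> nat \<times> bool" where "sysA' i \<equiv> (i, True)"

end

theory Submission
  imports Defs
begin

text \<open>No property of the von Neumann entropy is needed: the identity holds for an arbitrary
set function E. Each conditional mutual information term
I(A_k; A_K A'_{[l]\<setminus>{k}} | A'_k) equals H(A_k A'_k) - H(A'_k) minus the increment of E when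
A_k is added to A_K A'_{[l]}. Summing along the order \<pi>, these increments telescope from
H(A'_{[l]}) to H(A_{[l]} A'_{[l]}).\<close>

definition set_fun_cmi :: "('a set \<Rightarrow> real) \<Rightarrow> 'a set \<Rightarrow> 'a set \<Rightarrow> 'a set \<Rightarrow> real" where
  "set_fun_cmi E A B C = E (A \<union> C) + E (B \<union> C) - E C - E (A \<union> B \<union> C)"

definition set_fun_multi_info :: "('a set \<Rightarrow> real) \<Rightarrow> 'j set \<Rightarrow> ('j \<Rightarrow> 'a set) \<Rightarrow> real" where
  "set_fun_multi_info E J B = (\<Sum>j\<in>J. E (B j)) - E (\<Union>j\<in>J. B j)"

lemma cmi_eq_set_fun_cmi: "cmi d S \<rho> = set_fun_cmi (ent d S \<rho>)"
  by (simp add: fun_eq_iff cmi_def set_fun_cmi_def)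

lemma multi_info_eq_set_fun_multi_info: "multi_info d S \<rho> = set_fun_multi_info (ent d S \<rho>)"
  by (simp add: fun_eq_iff multi_info_def set_fun_multi_info_def)

lemma set_fun_cmi_eq_increment:
  fixes E :: "'a set \<Rightarrow> real" and a a' :: "'i \<Rightarrow> 'a"
  assumes "k \<in> I"
  shows "set_fun_cmi E {a k} (a ` K \<union> a' ` (I - {k})) {a' k}
       = E {a k, a' k} - E {a' k} - (E (a ` insert k K \<union> a' ` I) - E (a ` K \<union> a' ` I))"
proof -
  have "a ` K \<union> a' ` (I - {k}) \<union> {a' k} = a ` K \<union> a' ` I"
    using assms by auto
  moreover have "{a k} \<union> (a ` K \<union> a' ` (I - {k})) \<union> {a' k} = a ` insert k K \<union> a' ` I"
    using assms by auto
  ultimately show ?thesis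
    by (simp add: set_fun_cmi_def insert_commute)
qed

lemma set_fun_multi_info_chain_rule:
  fixes E :: "'a set \<Rightarrow> real" and a a' :: "nat \<Rightarrow> 'a"
  assumes \<pi>: "\<pi> permutes {1..l}"
  shows "set_fun_multi_info E {1..l} (\<lambda>j. {a j, a' j}) - set_fun_multi_info E {1..l} (\<lambda>j. {a' j})
       = (\<Sum>i=1..l. set_fun_cmi E {a (\<pi> i)}
            (a ` \<pi> ` {1..<i} \<union> a' ` ({1..l} - {\<pi> i})) {a' (\<pi> i)})"
proof -
  define X where "X i = E (a ` \<pi> ` {1..<i} \<union> a' ` {1..l})" for i
  have "(\<Sum>i=1..l. set_fun_cmi E {a (\<pi> i)} (a ` \<pi> ` {1..<i} \<union> a' ` ({1..l} - {\<pi> i})) {a' (\<pi> i)})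
      = (\<Sum>i=1..l. E {a (\<pi> i), a' (\<pi> i)} - E {a' (\<pi> i)} - (X (Suc i) - X i))"
  proof (rule sum.cong[OF refl])
    fix i assume "i \<in> {1..l}"
    then have "\<pi> i \<in> {1..l}"
      using \<pi> by (metis permutes_in_image)
    moreover have "insert (\<pi> i) (\<pi> ` {1..<i}) = \<pi> ` {1..<Suc i}"
      using \<open>i \<in> {1..l}\<close> by (auto simp: less_Suc_eq)
    ultimately show "set_fun_cmi E {a (\<pi> i)} (a ` \<pi> ` {1..<i} \<union> a' ` ({1..l} - {\<pi> i})) {a' (\<pi> i)}
        = E {a (\<pi> i), a' (\<pi> i)} - E {a' (\<pi> i)} - (X (Suc i) - X i)"
      by (simp add: set_fun_cmi_eq_increment X_def)
  qed
  also have "\<dots> = (\<Sum>i=1..l. E {a (\<pi> i), a' (\<pi> i)}) - (\<Sum>i=1..l. E {a' (\<pi> i)})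
      - (\<Sum>i=1..l. X (Suc i) - X i)"
    by (simp add: sum_subtractf)
  also have "(\<Sum>i=1..l. X (Suc i) - X i) = X (Suc l) - X 1"
    by (rule sum_Suc_diff) simp
  also have "(\<Sum>i=1..l. E {a (\<pi> i), a' (\<pi> i)}) = (\<Sum>j=1..l. E {a j, a' j})"
    using sum.permute[OF \<pi>, of "\<lambda>j. E {a j, a' j}"] by (simp add: comp_def)
  also have "(\<Sum>i=1..l. E {a' (\<pi> i)}) = (\<Sum>j=1..l. E {a' j})"
    using sum.permute[OF \<pi>, of "\<lambda>j. E {a' j}"] by (simp add: comp_def)
  also have "X 1 = E (\<Union>j\<in>{1..l}. {a' j})"
    unfolding X_def by (rule arg_cong[where f = E]) auto
  also have "X (Suc l) = E (\<Union>j\<in>{1..l}. {a j, a' j})"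
  proof -
    have "\<pi> ` {1..<Suc l} = {1..l}"
      using permutes_image[OF \<pi>] by (simp add: atLeastLessThanSuc_atLeastAtMost)
    then show ?thesis
      unfolding X_def by (intro arg_cong[where f = E]) auto
  qed
  finally show ?thesis
    by (simp add: set_fun_multi_info_def)
qed

theorem lemma1:
  fixes l :: nat and d :: "nat \<times> bool \<Rightarrow> nat" and \<rho> :: "(nat \<times> bool) op"
  assumes "l \<ge> 1"
    and "density d ({1..l} \<times> UNIV) \<rho>"
  shows "(multi_info d ({1..l} \<times> UNIV) \<rho> {1..l} (\<lambda>j. {sysA j, sysA' j})
           - multi_info d ({1..l} \<times> UNIV) \<rho> {1..l} (\<lambda>j. {sysA' j})
         = (\<Sum>i=1..l. cmi d ({1..l} \<times> UNIV) \<rho> {sysA i}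
              (sysA ` {1..<i} \<union> sysA' ` ({1..l} - {i})) {sysA' i}))
         \<and> (\<forall>\<pi>. \<pi> permutes {1..l} \<longrightarrow>
           multi_info d ({1..l} \<times> UNIV) \<rho> {1..l} (\<lambda>j. {sysA j, sysA' j})
           - multi_info d ({1..l} \<times> UNIV) \<rho> {1..l} (\<lambda>j. {sysA' j})
         = (\<Sum>i=1..l. cmi d ({1..l} \<times> UNIV) \<rho> {sysA (\<pi> i)}
              (sysA ` \<pi> ` {1..<i} \<union> sysA' ` ({1..l} - {\<pi> i})) {sysA' (\<pi> i)}))"
proof -
  note chain_rule = set_fun_multi_info_chain_rule[where E = "ent d ({1..l} \<times> UNIV) \<rho>"
      and a = sysA and a' = sysA', folded multi_info_eq_set_fun_multi_info cmi_eq_set_fun_cmi]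
  show ?thesis
    using chain_rule[OF permutes_id] chain_rule by simp
qed

end
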